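(* The assignment $\mathcal{P}$ described below is an algebra over the operad $\mathcal{W}$ of black boxes and wiring diagrams; that is: (1) (identity law) for every black box $Z$ and every $f\in\mathcal{P}(Z)$, $\mathcal{P}(\mathrm{id}_Z)(f)=f$; (2) (composition law) for every wiring diagram $\psi\colon (Y(i))_{i\in n}\to Z$, every family of wiring diagrams $\phi_i\colon (X_j)_{j\in m_i}\to Y(i)$ ($i\in n$), and every family of propagators $f_j\in\mathcal{P}(X_j)$ ($j\in m=\coprod_i m_i$), one has $$\mathcal{P}\big(\psi\circ(\phi_i)_{i\in n}\big)\big((f_j)_{j\in m}\big)=\mathcal{P}(\psi)\Big(\big(\mathcal{P}(\phi_i)((f_j)_{j\in m_i})\big)_{i\in n}\Big).$$
   Context: Wiring diagrams. A black box $X=(\mathrm{in}(X),\mathrm{out}(X),{\tt vset})$: finite sets of input and output wires with ${\tt vset}$ assigning a pointed set to each wire. For a family $Y=(Y(i))_{i\in n}$ put $\mathrm{in}(Y)=\coprod_i\mathrm{in}(Y(i))$, $\mathrm{out}(Y)=\coprod_i\mathrm{out}(Y(i))$. A wiring diagram $\psi\colon Y\to Z$ consists of a finite set $\mathrm{Del}(\psi)$ of delay nodes with pointed sets ${\tt vset}(d)$ and a supplier assignment $s_\psi\colon\mathrm{Dem}(\psi)=\mathrm{out}(Z)\amalg\mathrm{in}(Y)\amalg\mathrm{Del}(\psi)\to\mathrm{Sup}(\psi)=\mathrm{in}(Z)\amalg\mathrm{out}(Y)\amalg\mathrm{Del}(\psi)$ preserving ${\tt vset}$ with $s_\psi(\mathrm{out}(Z))\subseteq\mathrm{out}(Y)\amalg\mathrm{Del}(\psi)$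 (identified up to bijection of delay nodes). $\mathrm{id}_Z$ has no delay nodes and identity supplier assignment. Composition: for $\psi\colon Y\to Z$ and $\phi_i\colon X_i\to Y(i)$, let $\phi=\bigotimes\phi_i\colon X\to Y$ be the disjoint union; $\omega=\psi\circ\phi$ has $\mathrm{Del}(\omega)=\mathrm{Del}(\phi)\amalg\mathrm{Del}(\psi)$ and $s_\omega=h\circ s_\phi|_{\mathrm{in}(X)\amalg\mathrm{Del}(\phi)}\amalg f\circ s_\psi|_{\mathrm{out}(Z)\amalg\mathrm{Del}(\psi)}$ with $f=\mathrm{id}_{\mathrm{in}(Z)}\amalg s_\phi|_{\mathrm{out}(Y)}\amalg\mathrm{id}_{\mathrm{Del}(\psi)}\colon\mathrm{Sup}(\psi)\to\mathrm{Sup}(\omega)$, $h=(f\circ s_\psi)|_{\mathrm{in}(Y)}\amalg\mathrm{id}_{\mathrm{out}(X)}\amalg\mathrm{id}_{\mathrm{Del}(\phi)}\colon\mathrm{Sup}(\phi)\to\mathrm{Sup}(\omega)$, where $\mathrm{Sup}(\omega)=\mathrm{in}(Z)\amalg\mathrm{out}(X)\amalg\mathrm{Del}(\omega)$. Lists and propagators. $\mathrm{List}(S)=\coprod_{t\in\mathbb{N}}S^t$; $\partial\ell$ drops the last entry of a nonempty list; $[\,]$ is the empty list. A list of tuples in $\prod_k S_k$ is identified with a tuple of lists of equal length ("zipping"). An $n$-historical propagator $f\colon\mathrm{List}(R)\to\mathrm{List}(S)$ satisfies $|f(\ell)|=|\ell|+n$ and $\partial f(\ell)=f(\partial\ell)$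 for $|\ell|\ge1$; $\mathrm{Hist}^n(R,S)$ is their set. For a set $I$ of wires put ${\tt vset}_I=\prod_{i\in I}{\tt vset}(i)$ (a one-point set if $I=\emptyset$), and write $\overline{I}=\mathrm{List}({\tt vset}_I)$. The algebra $\mathcal{P}$. On objects, $\mathcal{P}(Z)=\mathrm{Hist}^1({\tt vset}_{\mathrm{in}(Z)},{\tt vset}_{\mathrm{out}(Z)})$. On a wiring diagram $\psi\colon (Y(i))_{i\in n}\to Z$ and $g_i\in\mathcal{P}(Y(i))$: let $g=\prod_i g_i\colon\overline{\mathrm{in}(Y)}\to\overline{\mathrm{out}(Y)}$ (applied componentwise after unzipping). Let $\mathrm{inDem}(\psi)=\mathrm{in}(Y)\amalg\mathrm{Del}(\psi)$ and $\mathrm{inSup}(\psi)=\mathrm{out}(Y)\amalg\mathrm{Del}(\psi)$. Define $S_\psi=\mathrm{List}(\pi_{s_\psi})\colon\overline{\mathrm{Sup}(\psi)}\to\overline{\mathrm{Dem}(\psi)}$ where $\pi_{s_\psi}((x_a)_{a\in\mathrm{Sup}})=(x_{s_\psi(d)})_{d\in\mathrm{Dem}}$; $S'_\psi=\pi_{\overline{\mathrm{inDem}(\psi)}}\circ S_\psi\colon\overline{\mathrm{Sup}(\psi)}\to\overline{\mathrm{inDem}(\psi)}$; $S''_\psi=\mathrm{List}(\pi_{s_\psi|_{\mathrm{out}(Z)}})\colon\overline{\mathrm{inSup}(\psi)}\to\overline{\mathrm{out}(Z)}$. Let $\delta^1_\psi\colon\overline{\mathrm{Del}(\psi)}\to\overline{\mathrm{Del}(\psi)}$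 be the 1-moment delay, prepending the basepoint: $\delta^1(\ell)=[*,\ell(1),\dots,\ell(t)]$. Set $E_{\psi,g}=g\times\delta^1_\psi\colon\overline{\mathrm{inDem}(\psi)}\to\overline{\mathrm{inSup}(\psi)}$, and define $C_{\psi,g}\colon\overline{\mathrm{in}(Z)}\to\overline{\mathrm{Sup}(\psi)}$ recursively by $C_{\psi,g}([\,])=[\,]$ and, for $|\ell|\geq1$, $C_{\psi,g}(\ell)=\big(\ell,\;E_{\psi,g}\circ S'_\psi\circ C_{\psi,g}(\partial\ell)\big)$ (a pair of equal-length lists in $\overline{\mathrm{in}(Z)}\times\overline{\mathrm{inSup}(\psi)}=\overline{\mathrm{Sup}(\psi)}$). Then $\mathcal{P}(\psi)(g_1,\dots,g_n)=S''_\psi\circ E_{\psi,g}\circ S'_\psi\circ C_{\psi,g}\in\mathcal{P}(Z)$. *)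

theory Defs
  imports "HOL-Library.FuncSet"
begin

text \<open>A pointed set is a pair (carrier, basepoint).  All values live in one ambient
  type 'v; wires live in an ambient type 'w.\<close>

type_synonym 'v pset = "'v set \<times> 'v"

definition pointed :: "'v pset \<Rightarrow> bool" where
  "pointed A \<longleftrightarrow> snd A \<in> fst A"

text \<open>A black box X = (in(X), out(X), vset).  vset is given separately on input
  and output wires (the paper's vset lives on the disjoint union in(X) + out(X)).\<close>

record ('w, 'v) box =
  inp  :: "'w set"
  outp :: "'w set"
  vin  :: "'w \<Rightarrow> 'v pset"
  vout :: "'w \<Rightarrow> 'v pset"

text \<open>Well-formed black boxes: finite wire sets, pointed value sets; the vset data
  outside the wire sets is canonical (undefined), so that record equality is
  equality of black boxes.\<close>

definition box_wf :: "('w, 'v) box \<Rightarrow> bool" where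
  "box_wf X \<longleftrightarrow> finite (inp X) \<and> finite (outp X)
     \<and> (\<forall>w\<in>inp X. pointed (vin X w)) \<and> (\<forall>w\<in>outp X. pointed (vout X w))
     \<and> vin X \<in> extensional (inp X) \<and> vout X \<in> extensional (outp X)"

definition tup :: "'a set \<Rightarrow> ('a \<Rightarrow> 'v pset) \<Rightarrow> ('a \<Rightarrow> 'v) set" where
  "tup I V = PiE I (\<lambda>a. fst (V a))"

text \<open>Hist^1(vset_in(Z), vset_out(Z)); propagators are compared on their domain
  List(vset_in(Z)), so P(Z) is the set of functions with the required behaviour on it.\<close>

definition hist1 :: "('w, 'v) box \<Rightarrow> (('w \<Rightarrow> 'v) list \<Rightarrow> ('w \<Rightarrow> 'v) list) \<Rightarrow> bool" where
  "hist1 Z f \<longleftrightarrow> (\<forall>l\<in>lists (tup (inp Z) (vin Z)).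
      f l \<in> lists (tup (outp Z) (vout Z))
      \<and> length (f l) = length l + 1
      \<and> (l \<noteq> [] \<longrightarrow> butlast (f l) = f (butlast l)))"

text \<open>Demand ports Dem = out(Z) + in(Y) + Del and supply ports Sup = in(Z) + out(Y) + Del;
  the family Y is indexed by a finite index set of type 'i, and in(Y) = coproduct.\<close>

datatype ('w, 'i, 'd) dport = DOutZ 'w | DInY 'i 'w | DDel 'd
datatype ('w, 'i, 'd) sport = SInZ 'w | SOutY 'i 'w | SDel 'd

record ('w, 'i, 'd, 'v) wd =
  idx  :: "'i set"
  dbox :: "'i \<Rightarrow> ('w, 'v) box"
  cbox :: "('w, 'v) box"
  del  :: "'d set"
  dvs  :: "'d \<Rightarrow> 'v pset"
  sup  :: "('w, 'i, 'd) dport \<Rightarrow> ('w, 'i, 'd) sport"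

definition inDem :: "('w, 'i, 'd, 'v) wd \<Rightarrow> ('w, 'i, 'd) dport set" where
  "inDem \<psi> = {DInY i w | i w. i \<in> idx \<psi> \<and> w \<in> inp (dbox \<psi> i)} \<union> DDel ` del \<psi>"

definition demset :: "('w, 'i, 'd, 'v) wd \<Rightarrow> ('w, 'i, 'd) dport set" where
  "demset \<psi> = DOutZ ` outp (cbox \<psi>) \<union> inDem \<psi>"

definition inSup :: "('w, 'i, 'd, 'v) wd \<Rightarrow> ('w, 'i, 'd) sport set" where
  "inSup \<psi> = {SOutY i w | i w. i \<in> idx \<psi> \<and> w \<in> outp (dbox \<psi> i)} \<union> SDel ` del \<psi>"

definition supset :: "('w, 'i, 'd, 'v) wd \<Rightarrow> ('w, 'i, 'd) sport set" where
  "supset \<psi> = SInZ ` inp (cbox \<psi>) \<union> inSup \<psi>"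

fun vsetD :: "('w, 'i, 'd, 'v) wd \<Rightarrow> ('w, 'i, 'd) dport \<Rightarrow> 'v pset" where
  "vsetD \<psi> (DOutZ w) = vout (cbox \<psi>) w"
| "vsetD \<psi> (DInY i w) = vin (dbox \<psi> i) w"
| "vsetD \<psi> (DDel d) = dvs \<psi> d"

fun vsetS :: "('w, 'i, 'd, 'v) wd \<Rightarrow> ('w, 'i, 'd) sport \<Rightarrow> 'v pset" where
  "vsetS \<psi> (SInZ w) = vin (cbox \<psi>) w"
| "vsetS \<psi> (SOutY i w) = vout (dbox \<psi> i) w"
| "vsetS \<psi> (SDel d) = dvs \<psi> d"

definition wd_wf :: "('w, 'i, 'd, 'v) wd \<Rightarrow> bool" where
  "wd_wf \<psi> \<longleftrightarrow> finite (idx \<psi>) \<and> (\<forall>i\<in>idx \<psi>. box_wf (dbox \<psi> i)) \<and> box_wf (cbox \<psi>)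
     \<and> finite (del \<psi>) \<and> (\<forall>d\<in>del \<psi>. pointed (dvs \<psi> d))
     \<and> (\<forall>p\<in>demset \<psi>. sup \<psi> p \<in> supset \<psi> \<and> vsetS \<psi> (sup \<psi> p) = vsetD \<psi> p)
     \<and> (\<forall>w\<in>outp (cbox \<psi>). sup \<psi> (DOutZ w) \<in> inSup \<psi>)"

definition wd_id :: "('w, 'v) box \<Rightarrow> 'i \<Rightarrow> ('w, 'i, 'd, 'v) wd" where
  "wd_id Z i0 = \<lparr> idx = {i0}, dbox = (\<lambda>_. Z), cbox = Z, del = {}, dvs = (\<lambda>_. undefined),
     sup = (\<lambda>p. case p of DOutZ w \<Rightarrow> SOutY i0 w | DInY i w \<Rightarrow> SInZ w | DDel d \<Rightarrow> undefined) \<rparr>"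

fun liftX :: "'i \<Rightarrow> ('w, 'k, 'e) sport \<Rightarrow> ('w, 'i \<times> 'k, ('i \<times> 'e) + 'd) sport" where
  "liftX i (SOutY k w) = SOutY (i, k) w"
| "liftX i (SDel e) = SDel (Inl (i, e))"
| "liftX i (SInZ w) = undefined"

fun comp_f :: "('w, 'i, 'd, 'v) wd \<Rightarrow> ('i \<Rightarrow> ('w, 'k, 'e, 'v) wd)
    \<Rightarrow> ('w, 'i, 'd) sport \<Rightarrow> ('w, 'i \<times> 'k, ('i \<times> 'e) + 'd) sport" where
  "comp_f \<psi> \<phi> (SInZ w) = SInZ w"
| "comp_f \<psi> \<phi> (SOutY i w) = liftX i (sup (\<phi> i) (DOutZ w))"
| "comp_f \<psi> \<phi> (SDel d) = SDel (Inr d)"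

fun comp_h :: "('w, 'i, 'd, 'v) wd \<Rightarrow> ('i \<Rightarrow> ('w, 'k, 'e, 'v) wd) \<Rightarrow> 'i
    \<Rightarrow> ('w, 'k, 'e) sport \<Rightarrow> ('w, 'i \<times> 'k, ('i \<times> 'e) + 'd) sport" where
  "comp_h \<psi> \<phi> i (SInZ w) = comp_f \<psi> \<phi> (sup \<psi> (DInY i w))"
| "comp_h \<psi> \<phi> i (SOutY k w) = SOutY (i, k) w"
| "comp_h \<psi> \<phi> i (SDel e) = SDel (Inl (i, e))"

fun comp_sup :: "('w, 'i, 'd, 'v) wd \<Rightarrow> ('i \<Rightarrow> ('w, 'k, 'e, 'v) wd)
    \<Rightarrow> ('w, 'i \<times> 'k, ('i \<times> 'e) + 'd) dport \<Rightarrow> ('w, 'i \<times> 'k, ('i \<times> 'e) + 'd) sport" where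
  "comp_sup \<psi> \<phi> (DOutZ w) = comp_f \<psi> \<phi> (sup \<psi> (DOutZ w))"
| "comp_sup \<psi> \<phi> (DInY (i, k) w) = comp_h \<psi> \<phi> i (sup (\<phi> i) (DInY k w))"
| "comp_sup \<psi> \<phi> (DDel (Inl (i, e))) = comp_h \<psi> \<phi> i (sup (\<phi> i) (DDel e))"
| "comp_sup \<psi> \<phi> (DDel (Inr d)) = comp_f \<psi> \<phi> (sup \<psi> (DDel d))"

definition wd_comp :: "('w, 'i, 'd, 'v) wd \<Rightarrow> ('i \<Rightarrow> ('w, 'k, 'e, 'v) wd)
    \<Rightarrow> ('w, 'i \<times> 'k, ('i \<times> 'e) + 'd, 'v) wd" where
  "wd_comp \<psi> \<phi> = \<lparr> idx = Sigma (idx \<psi>) (\<lambda>i. idx (\<phi> i)),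
     dbox = (\<lambda>(i, k). dbox (\<phi> i) k),
     cbox = cbox \<psi>,
     del = Sigma (idx \<psi>) (\<lambda>i. del (\<phi> i)) <+> del \<psi>,
     dvs = case_sum (\<lambda>(i, e). dvs (\<phi> i) e) (dvs \<psi>),
     sup = comp_sup \<psi> \<phi> \<rparr>"

text \<open>Lists of tuples over a set of ports are lists of (extensional) functions on ports;
  a pair of equal-length lists is zipped into one list of tuples.\<close>

type_synonym ('a, 'v) propag = "('a \<Rightarrow> 'v) list \<Rightarrow> ('a \<Rightarrow> 'v) list"

definition unzipY :: "('w, 'i, 'd, 'v) wd \<Rightarrow> 'i \<Rightarrow> (('w, 'i, 'd) dport \<Rightarrow> 'v) \<Rightarrow> ('w \<Rightarrow> 'v)" where
  "unzipY \<psi> i x = (\<lambda>w. if w \<in> inp (dbox \<psi> i) then x (DInY i w) else undefined)"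

text \<open>E = g \<times> delta^1 : List(vset_inDem) \<rightarrow> List(vset_inSup), where g = prod_i g_i
  is applied componentwise and delta^1 prepends the basepoint tuple of Del.\<close>

definition Eop :: "('w, 'i, 'd, 'v) wd \<Rightarrow> ('i \<Rightarrow> ('w, 'v) propag)
    \<Rightarrow> (('w, 'i, 'd) dport \<Rightarrow> 'v) list \<Rightarrow> (('w, 'i, 'd) sport \<Rightarrow> 'v) list" where
  "Eop \<psi> g l = map (\<lambda>t. \<lambda>p. case p of
        SInZ w \<Rightarrow> undefined
      | SOutY i w \<Rightarrow> (if i \<in> idx \<psi> \<and> w \<in> outp (dbox \<psi> i)
                      then (g i (map (unzipY \<psi> i) l) ! t) w else undefined)
      | SDel d \<Rightarrow> (if d \<in> del \<psi>
                   then (if t = 0 then snd (dvs \<psi> d) else (l ! (t - 1)) (DDel d))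
                   else undefined))
    [0..<Suc (length l)]"

definition pi_s :: "('w, 'i, 'd, 'v) wd \<Rightarrow> (('w, 'i, 'd) sport \<Rightarrow> 'v) \<Rightarrow> (('w, 'i, 'd) dport \<Rightarrow> 'v)" where
  "pi_s \<psi> x = (\<lambda>p. if p \<in> demset \<psi> then x (sup \<psi> p) else undefined)"

definition Sop :: "('w, 'i, 'd, 'v) wd \<Rightarrow> (('w, 'i, 'd) sport \<Rightarrow> 'v) list \<Rightarrow> (('w, 'i, 'd) dport \<Rightarrow> 'v) list" where
  "Sop \<psi> = map (pi_s \<psi>)"

definition S'op :: "('w, 'i, 'd, 'v) wd \<Rightarrow> (('w, 'i, 'd) sport \<Rightarrow> 'v) list \<Rightarrow> (('w, 'i, 'd) dport \<Rightarrow> 'v) list" where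
  "S'op \<psi> l = map (\<lambda>x. \<lambda>p. if p \<in> inDem \<psi> then x p else undefined) (Sop \<psi> l)"

definition S''op :: "('w, 'i, 'd, 'v) wd \<Rightarrow> (('w, 'i, 'd) sport \<Rightarrow> 'v) list \<Rightarrow> ('w \<Rightarrow> 'v) list" where
  "S''op \<psi> = map (\<lambda>x. \<lambda>w. if w \<in> outp (cbox \<psi>) then x (sup \<psi> (DOutZ w)) else undefined)"

definition joinSup :: "('w, 'i, 'd, 'v) wd \<Rightarrow> ('w \<Rightarrow> 'v) list \<Rightarrow> (('w, 'i, 'd) sport \<Rightarrow> 'v) list
    \<Rightarrow> (('w, 'i, 'd) sport \<Rightarrow> 'v) list" where
  "joinSup \<psi> l m = map (\<lambda>t. \<lambda>p. case p of
        SInZ w \<Rightarrow> (if w \<in> inp (cbox \<psi>) then (l ! t) w else undefined)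
      | _ \<Rightarrow> (m ! t) p) [0..<length l]"

fun Cop :: "('w, 'i, 'd, 'v) wd \<Rightarrow> ('i \<Rightarrow> ('w, 'v) propag)
    \<Rightarrow> ('w \<Rightarrow> 'v) list \<Rightarrow> (('w, 'i, 'd) sport \<Rightarrow> 'v) list" where
  "Cop \<psi> g l = (if l = [] then []
      else joinSup \<psi> l (Eop \<psi> g (S'op \<psi> (Cop \<psi> g (butlast l)))))"

definition Pact :: "('w, 'i, 'd, 'v) wd \<Rightarrow> ('i \<Rightarrow> ('w, 'v) propag) \<Rightarrow> ('w, 'v) propag" where
  "Pact \<psi> g l = S''op \<psi> (Eop \<psi> g (S'op \<psi> (Cop \<psi> g l)))"

end

theory Submission
  imports Defs
begin

text \<open>The trace C of a wiring diagram \<psi> on an input stream l is the unique well-typed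
  solution X of the feedback equation X = join l (E (S' X)): E is 1-historical, so the
  t-th entry of the right-hand side only depends on the entries of X before t.
  For the identity diagram the feedback equation forces the inner input stream to be l,
  so the output is f l.  For a composite \<omega> = \<psi> \<circ> (\<phi> i) one assembles a stream J on the
  supply ports of \<omega> from the trace of \<psi> (run with the propagators P(\<phi> i)) and the traces
  of the \<phi> i (run on the inputs that the trace of \<psi> feeds to Y(i)).  Checking port by
  port, J solves the feedback equation of \<omega>, so it is the trace of \<omega> by uniqueness, and
  the outputs of \<omega> and of \<psi> are read off the same ports of J.\<close>

declare Cop.simps[simp del]

lemma Cop_Nil[simp]: "Cop \<psi> g [] = []"
  by (simp add: Cop.simps)

lemma Cop_not_Nil:
  "l \<noteq> [] \<Longrightarrow> Cop \<psi> g l = joinSup \<psi> l (Eop \<psi> g (S'op \<psi> (Cop \<psi> g (butlast l))))"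
  by (simp add: Cop.simps)

lemma tup_iff:
  "x \<in> tup I V \<longleftrightarrow> (\<forall>a\<in>I. x a \<in> fst (V a)) \<and> (\<forall>a. a \<notin> I \<longrightarrow> x a = undefined)"
  by (auto simp: tup_def PiE_iff extensional_def)

lemma tupD: "x \<in> tup I V \<Longrightarrow> a \<in> I \<Longrightarrow> x a \<in> fst (V a)"
  by (simp add: tup_iff)

lemma tup_undefined: "x \<in> tup I V \<Longrightarrow> a \<notin> I \<Longrightarrow> x a = undefined"
  by (simp add: tup_iff)

lemma in_lists_iff_nth: "xs \<in> lists A \<longleftrightarrow> (\<forall>t<length xs. xs ! t \<in> A)"
  by (simp add: in_lists_conv_set all_set_conv_all_nth)

lemma butlast_in_lists: "xs \<in> lists A \<Longrightarrow> butlast xs \<in> lists A"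
  by (auto dest: in_set_butlastD)

lemma inDem_simps[simp]:
  "DInY i w \<in> inDem \<psi> \<longleftrightarrow> i \<in> idx \<psi> \<and> w \<in> inp (dbox \<psi> i)"
  "DDel d \<in> inDem \<psi> \<longleftrightarrow> d \<in> del \<psi>"
  "DOutZ w \<notin> inDem \<psi>"
  by (auto simp: inDem_def)

lemma demset_simps[simp]:
  "DInY i w \<in> demset \<psi> \<longleftrightarrow> i \<in> idx \<psi> \<and> w \<in> inp (dbox \<psi> i)"
  "DDel d \<in> demset \<psi> \<longleftrightarrow> d \<in> del \<psi>"
  "DOutZ w \<in> demset \<psi> \<longleftrightarrow> w \<in> outp (cbox \<psi>)"
  by (auto simp: demset_def inDem_def)

lemma inSup_simps[simp]:
  "SOutY i w \<in> inSup \<psi> \<longleftrightarrow> i \<in> idx \<psi> \<and> w \<in> outp (dbox \<psi> i)"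
  "SDel d \<in> inSup \<psi> \<longleftrightarrow> d \<in> del \<psi>"
  "SInZ w \<notin> inSup \<psi>"
  by (auto simp: inSup_def)

lemma supset_simps[simp]:
  "SOutY i w \<in> supset \<psi> \<longleftrightarrow> i \<in> idx \<psi> \<and> w \<in> outp (dbox \<psi> i)"
  "SDel d \<in> supset \<psi> \<longleftrightarrow> d \<in> del \<psi>"
  "SInZ w \<in> supset \<psi> \<longleftrightarrow> w \<in> inp (cbox \<psi>)"
  by (auto simp: supset_def inSup_def)

lemma inSup_subset_supset: "inSup \<psi> \<subseteq> supset \<psi>"
  by (simp add: supset_def)

lemma length_Eop[simp]: "length (Eop \<psi> g L) = Suc (length L)"
  by (simp add: Eop_def)

lemma length_S'op[simp]: "length (S'op \<psi> X) = length X"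
  by (simp add: S'op_def Sop_def)

lemma length_S''op[simp]: "length (S''op \<psi> X) = length X"
  by (simp add: S''op_def)

lemma length_joinSup[simp]: "length (joinSup \<psi> l m) = length l"
  by (simp add: joinSup_def)

lemma length_Cop[simp]: "length (Cop \<psi> g l) = length l"
proof (induction "length l" arbitrary: l)
  case (Suc n)
  then show ?case by (cases l rule: rev_cases) (simp_all add: Cop_not_Nil)
qed simp

lemma length_Pact[simp]: "length (Pact \<psi> g l) = Suc (length l)"
  by (simp add: Pact_def)

lemma Eop_nth_SInZ[simp]: "t \<le> length L \<Longrightarrow> (Eop \<psi> g L ! t) (SInZ w) = undefined"
  by (simp add: Eop_def nth_append del: upt_Suc)

lemma Eop_nth_SOutY[simp]:
  "t \<le> length L \<Longrightarrow> (Eop \<psi> g L ! t) (SOutY i w) =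
    (if i \<in> idx \<psi> \<and> w \<in> outp (dbox \<psi> i) then (g i (map (unzipY \<psi> i) L) ! t) w else undefined)"
  by (simp add: Eop_def del: upt_Suc)

lemma Eop_nth_SDel[simp]:
  "t \<le> length L \<Longrightarrow> (Eop \<psi> g L ! t) (SDel d) =
    (if d \<in> del \<psi> then (if t = 0 then snd (dvs \<psi> d) else (L ! (t - 1)) (DDel d)) else undefined)"
  by (simp add: Eop_def del: upt_Suc)

lemma S'op_nth[simp]:
  "t < length X \<Longrightarrow>
    S'op \<psi> X ! t = (\<lambda>p. if p \<in> inDem \<psi> then (X ! t) (sup \<psi> p) else undefined)"
  by (auto simp: S'op_def Sop_def pi_s_def demset_def)

lemma S''op_nth[simp]:
  "t < length X \<Longrightarrow>
    S''op \<psi> X ! t = (\<lambda>w. if w \<in> outp (cbox \<psi>) then (X ! t) (sup \<psi> (DOutZ w)) else undefined)"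
  by (simp add: S''op_def)

lemma joinSup_nth[simp]:
  assumes "t < length l"
  shows "(joinSup \<psi> l m ! t) (SInZ w) = (if w \<in> inp (cbox \<psi>) then (l ! t) w else undefined)"
    and "(joinSup \<psi> l m ! t) (SOutY i w) = (m ! t) (SOutY i w)"
    and "(joinSup \<psi> l m ! t) (SDel d) = (m ! t) (SDel d)"
  using assms by (simp_all add: joinSup_def)

lemma joinSup_cong:
  "(\<And>t. t < length l \<Longrightarrow> m ! t = m' ! t) \<Longrightarrow> joinSup \<psi> l m = joinSup \<psi> l m'"
  unfolding joinSup_def by (rule map_cong) (auto split: sport.split)

lemma joinSup_butlast_right:
  "length l < length m \<Longrightarrow> joinSup \<psi> l (butlast m) = joinSup \<psi> l m"
  by (rule joinSup_cong) (simp add: nth_butlast)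

lemma butlast_joinSup: "butlast (joinSup \<psi> l m) = joinSup \<psi> (butlast l) m"
  by (rule nth_equalityI) (auto simp: nth_butlast joinSup_def split: sport.split)

lemma S'op_butlast: "S'op \<psi> (butlast X) = butlast (S'op \<psi> X)"
  by (simp add: S'op_def Sop_def map_butlast)

lemma S''op_butlast: "S''op \<psi> (butlast X) = butlast (S''op \<psi> X)"
  by (simp add: S''op_def map_butlast)

section \<open>Well-typed streams\<close>

text \<open>The part of \<open>wd_wf\<close> that the semantics depends on; it omits finiteness and
  well-formedness of the boxes, which makes its preservation under composition easy.\<close>

definition wd_typed :: "('w, 'i, 'd, 'v) wd \<Rightarrow> bool" where
  "wd_typed \<psi> \<longleftrightarrow>
     (\<forall>p\<in>inDem \<psi>. sup \<psi> p \<in> supset \<psi> \<and> vsetS \<psi> (sup \<psi> p) = vsetD \<psi> p)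
     \<and> (\<forall>d\<in>del \<psi>. pointed (dvs \<psi> d))
     \<and> (\<forall>w\<in>outp (cbox \<psi>). sup \<psi> (DOutZ w) \<in> inSup \<psi>
          \<and> vsetS \<psi> (sup \<psi> (DOutZ w)) = vout (cbox \<psi>) w)"

definition hist1_family :: "('w, 'i, 'd, 'v) wd \<Rightarrow> ('i \<Rightarrow> ('w, 'v) propag) \<Rightarrow> bool" where
  "hist1_family \<psi> g \<longleftrightarrow> (\<forall>i\<in>idx \<psi>. hist1 (dbox \<psi> i) (g i))"

lemma wd_wf_imp_wd_typed: "wd_wf \<psi> \<Longrightarrow> wd_typed \<psi>"
  unfolding wd_wf_def wd_typed_def demset_def by auto

lemma wd_typedD:
  assumes "wd_typed \<psi>"
  shows "p \<in> inDem \<psi> \<Longrightarrow> sup \<psi> p \<in> supset \<psi>"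
    and "p \<in> inDem \<psi> \<Longrightarrow> vsetS \<psi> (sup \<psi> p) = vsetD \<psi> p"
    and "w \<in> outp (cbox \<psi>) \<Longrightarrow> sup \<psi> (DOutZ w) \<in> inSup \<psi>"
    and "w \<in> outp (cbox \<psi>) \<Longrightarrow> vsetS \<psi> (sup \<psi> (DOutZ w)) = vout (cbox \<psi>) w"
    and "d \<in> del \<psi> \<Longrightarrow> pointed (dvs \<psi> d)"
  using assms by (auto simp: wd_typed_def)

abbreviation "sup_tups \<psi> \<equiv> tup (supset \<psi>) (vsetS \<psi>)"
abbreviation "inDem_tups \<psi> \<equiv> tup (inDem \<psi>) (vsetD \<psi>)"
abbreviation "inSup_tups \<psi> \<equiv> tup (inSup \<psi>) (vsetS \<psi>)"
abbreviation "in_tups Z \<equiv> tup (inp Z) (vin Z)"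
abbreviation "out_tups Z \<equiv> tup (outp Z) (vout Z)"

lemma hist1D:
  assumes "hist1 Z f" and "l \<in> lists (in_tups Z)"
  shows "f l \<in> lists (out_tups Z)" and "length (f l) = Suc (length l)"
    and "l \<noteq> [] \<Longrightarrow> butlast (f l) = f (butlast l)"
  using assms unfolding hist1_def by auto

lemma unzipY_in_tups:
  "x \<in> inDem_tups \<psi> \<Longrightarrow> i \<in> idx \<psi> \<Longrightarrow> unzipY \<psi> i x \<in> in_tups (dbox \<psi> i)"
  unfolding tup_iff by (auto simp: unzipY_def) (metis inDem_simps(1) vsetD.simps(2))

lemma map_unzipY_in_lists:
  "L \<in> lists (inDem_tups \<psi>) \<Longrightarrow> i \<in> idx \<psi> \<Longrightarrow> map (unzipY \<psi> i) L \<in> lists (in_tups (dbox \<psi> i))"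
  by (auto intro!: unzipY_in_tups)

lemma Eop_in_lists:
  assumes typed: "wd_typed \<psi>" and g: "hist1_family \<psi> g" and L: "L \<in> lists (inDem_tups \<psi>)"
  shows "Eop \<psi> g L \<in> lists (inSup_tups \<psi>)"
  unfolding in_lists_iff_nth
proof (intro allI impI)
  fix t assume "t < length (Eop \<psi> g L)"
  then have t: "t \<le> length L" by simp
  show "Eop \<psi> g L ! t \<in> inSup_tups \<psi>"
    unfolding tup_iff
  proof (intro conjI ballI allI impI)
    fix a assume a: "a \<in> inSup \<psi>"
    show "(Eop \<psi> g L ! t) a \<in> fst (vsetS \<psi> a)"
    proof (cases a)
      case (SInZ w)
      with a show ?thesis by simp
    next
      case (SOutY i w)
      with a have i: "i \<in> idx \<psi>" and w: "w \<in> outp (dbox \<psi> i)" by auto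
      have "hist1 (dbox \<psi> i) (g i)" using g i by (simp add: hist1_family_def)
      from hist1D[OF this map_unzipY_in_lists[OF L i]] t
      have "g i (map (unzipY \<psi> i) L) ! t \<in> out_tups (dbox \<psi> i)"
        by (simp add: in_lists_iff_nth)
      with SOutY i w t show ?thesis by (simp add: tup_iff)
    next
      case (SDel d)
      with a have d: "d \<in> del \<psi>" by simp
      show ?thesis
      proof (cases "t = 0")
        case True
        with wd_typedD(5)[OF typed d] SDel d t show ?thesis by (simp add: pointed_def)
      next
        case False
        with L t have "L ! (t - 1) \<in> inDem_tups \<psi>" by (simp add: in_lists_iff_nth)
        from tupD[OF this, of "DDel d"] False d SDel t show ?thesis by simp
      qed
    qed
  next
    fix a assume "a \<notin> inSup \<psi>"
    with t show "(Eop \<psi> g L ! t) a = undefined" by (cases a) auto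
  qed
qed

lemma S'op_in_lists:
  assumes typed: "wd_typed \<psi>" and X: "X \<in> lists (sup_tups \<psi>)"
  shows "S'op \<psi> X \<in> lists (inDem_tups \<psi>)"
  unfolding in_lists_iff_nth
proof (intro allI impI)
  fix t assume "t < length (S'op \<psi> X)"
  then have t: "t < length X" by simp
  with X have "X ! t \<in> sup_tups \<psi>" by (simp add: in_lists_iff_nth)
  with t typed show "S'op \<psi> X ! t \<in> inDem_tups \<psi>"
    unfolding tup_iff wd_typed_def by auto metis
qed

lemma joinSup_in_lists:
  assumes l: "l \<in> lists (in_tups (cbox \<psi>))" and M: "M \<in> lists (inSup_tups \<psi>)"
    and len: "length l \<le> length M"
  shows "joinSup \<psi> l M \<in> lists (sup_tups \<psi>)"
  unfolding in_lists_iff_nth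
proof (intro allI impI)
  fix t assume "t < length (joinSup \<psi> l M)"
  then have t: "t < length l" by simp
  have lt: "l ! t \<in> in_tups (cbox \<psi>)" using l t by (simp add: in_lists_iff_nth)
  have Mt: "M ! t \<in> inSup_tups \<psi>" using M t len by (simp add: in_lists_iff_nth)
  show "joinSup \<psi> l M ! t \<in> sup_tups \<psi>"
    unfolding tup_iff
  proof (intro conjI ballI allI impI)
    fix a assume "a \<in> supset \<psi>"
    with t tupD[OF lt] tupD[OF Mt, of a] show "(joinSup \<psi> l M ! t) a \<in> fst (vsetS \<psi> a)"
      by (cases a) auto
  next
    fix a assume "a \<notin> supset \<psi>"
    with t tup_undefined[OF lt] tup_undefined[OF Mt, of a] show "(joinSup \<psi> l M ! t) a = undefined"
      by (cases a) auto
  qed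
qed

lemma Cop_in_lists:
  assumes typed: "wd_typed \<psi>" and g: "hist1_family \<psi> g"
  shows "l \<in> lists (in_tups (cbox \<psi>)) \<Longrightarrow> Cop \<psi> g l \<in> lists (sup_tups \<psi>)"
proof (induction "length l" arbitrary: l)
  case (Suc n)
  then have "Cop \<psi> g (butlast l) \<in> lists (sup_tups \<psi>)"
    by (simp add: butlast_in_lists)
  then have "Eop \<psi> g (S'op \<psi> (Cop \<psi> g (butlast l))) \<in> lists (inSup_tups \<psi>)"
    by (intro Eop_in_lists typed g S'op_in_lists)
  moreover from Suc.hyps(2) have "l \<noteq> []" by auto
  ultimately show ?case using Suc.prems by (simp add: Cop_not_Nil joinSup_in_lists)
qed simp

section \<open>Causality and the feedback equation\<close>

lemma hist1_nth_butlast: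
  assumes f: "hist1 Z f" and l: "l \<in> lists (in_tups Z)" and t: "t < length l"
  shows "f (butlast l) ! t = f l ! t"
proof -
  from t have "l \<noteq> []" by auto
  with hist1D[OF f l] have "f (butlast l) = butlast (f l)" by simp
  with hist1D(2)[OF f l] t show ?thesis by (simp add: nth_butlast)
qed

lemma Eop_butlast:
  assumes g: "hist1_family \<psi> g" and L: "L \<in> lists (inDem_tups \<psi>)" and "L \<noteq> []"
  shows "Eop \<psi> g (butlast L) = butlast (Eop \<psi> g L)"
proof (rule nth_equalityI)
  fix t assume "t < length (Eop \<psi> g (butlast L))"
  with \<open>L \<noteq> []\<close> have t: "t < length L" by simp
  have gi: "g i (map (unzipY \<psi> i) (butlast L)) ! t = g i (map (unzipY \<psi> i) L) ! t"
    if "i \<in> idx \<psi>" for i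
    using hist1_nth_butlast[of _ "g i", OF _ map_unzipY_in_lists[OF L that]] t g that
    by (simp add: hist1_family_def map_butlast)
  show "Eop \<psi> g (butlast L) ! t = butlast (Eop \<psi> g L) ! t"
  proof
    fix p
    from t show "(Eop \<psi> g (butlast L) ! t) p = (butlast (Eop \<psi> g L) ! t) p"
      by (cases p) (auto simp: nth_butlast gi)
  qed
qed (use \<open>L \<noteq> []\<close> in simp)

lemma Cop_butlast:
  assumes typed: "wd_typed \<psi>" and g: "hist1_family \<psi> g"
  shows "l \<in> lists (in_tups (cbox \<psi>)) \<Longrightarrow> Cop \<psi> g (butlast l) = butlast (Cop \<psi> g l)"
proof (induction "length l" arbitrary: l)
  case 0
  then show ?case by simp
next
  case (Suc n)
  let ?l' = "butlast l"
  from Suc.hyps(2) have "l \<noteq> []" by auto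
  show ?case
  proof (cases "?l' = []")
    case True
    then show ?thesis by (metis Cop_Nil length_0_conv length_Cop length_butlast)
  next
    case False
    have l': "?l' \<in> lists (in_tups (cbox \<psi>))" using Suc.prems by (rule butlast_in_lists)
    with Suc.hyps have IH: "Cop \<psi> g (butlast ?l') = butlast (Cop \<psi> g ?l')" by simp
    have L: "S'op \<psi> (Cop \<psi> g ?l') \<in> lists (inDem_tups \<psi>)"
      by (intro S'op_in_lists Cop_in_lists typed g l')
    from False have "S'op \<psi> (Cop \<psi> g ?l') \<noteq> []" by (metis length_0_conv length_Cop length_S'op)
    from Eop_butlast[OF g L this]
    have E: "Eop \<psi> g (S'op \<psi> (Cop \<psi> g (butlast ?l'))) = butlast (Eop \<psi> g (S'op \<psi> (Cop \<psi> g ?l')))"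
      by (simp only: IH S'op_butlast)
    have "butlast (Cop \<psi> g l) = joinSup \<psi> ?l' (Eop \<psi> g (S'op \<psi> (Cop \<psi> g ?l')))"
      unfolding Cop_not_Nil[OF \<open>l \<noteq> []\<close>] butlast_joinSup by (rule refl)
    also have "\<dots> = joinSup \<psi> ?l' (Eop \<psi> g (S'op \<psi> (Cop \<psi> g (butlast ?l'))))"
      unfolding E by (rule joinSup_butlast_right[symmetric]) simp
    also have "\<dots> = Cop \<psi> g ?l'"
      unfolding Cop_not_Nil[OF False] by (rule refl)
    finally show ?thesis by (rule sym)
  qed
qed

lemma Cop_fixpoint:
  assumes typed: "wd_typed \<psi>" and g: "hist1_family \<psi> g" and l: "l \<in> lists (in_tups (cbox \<psi>))"
  shows "Cop \<psi> g l = joinSup \<psi> l (Eop \<psi> g (S'op \<psi> (Cop \<psi> g l)))"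
proof (cases "l = []")
  case True
  then show ?thesis by (simp add: joinSup_def)
next
  case False
  have L: "S'op \<psi> (Cop \<psi> g l) \<in> lists (inDem_tups \<psi>)"
    by (intro S'op_in_lists Cop_in_lists typed g l)
  from False have "S'op \<psi> (Cop \<psi> g l) \<noteq> []" by (metis length_0_conv length_Cop length_S'op)
  note E = Eop_butlast[OF g L this]
  have "Cop \<psi> g l = joinSup \<psi> l (Eop \<psi> g (S'op \<psi> (Cop \<psi> g (butlast l))))"
    by (rule Cop_not_Nil[OF False])
  also have "\<dots> = joinSup \<psi> l (Eop \<psi> g (S'op \<psi> (Cop \<psi> g l)))"
    unfolding Cop_butlast[OF typed g l] S'op_butlast E by (rule joinSup_butlast_right) simp
  finally show ?thesis .
qed

lemma Cop_unique_fixpoint: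
  assumes typed: "wd_typed \<psi>" and g: "hist1_family \<psi> g"
  shows "l \<in> lists (in_tups (cbox \<psi>)) \<Longrightarrow> X \<in> lists (sup_tups \<psi>) \<Longrightarrow>
    X = joinSup \<psi> l (Eop \<psi> g (S'op \<psi> X)) \<Longrightarrow> X = Cop \<psi> g l"
proof (induction "length l" arbitrary: l X)
  case 0
  then show ?case by (metis length_0_conv length_joinSup Cop_Nil)
next
  case (Suc n)
  let ?E = "Eop \<psi> g (S'op \<psi> X)"
  have lenX: "length X = length l"
    using arg_cong[OF Suc.prems(3), of length] by simp
  with Suc.hyps(2) have "S'op \<psi> X \<noteq> []" by (metis length_0_conv length_S'op nat.distinct(1))
  from Eop_butlast[OF g S'op_in_lists[OF typed Suc.prems(2)] this]
  have E: "Eop \<psi> g (S'op \<psi> (butlast X)) = butlast ?E" by (simp only: S'op_butlast)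
  have "butlast X = joinSup \<psi> (butlast l) ?E"
    using arg_cong[OF Suc.prems(3), of butlast] by (simp only: butlast_joinSup)
  also have "\<dots> = joinSup \<psi> (butlast l) (Eop \<psi> g (S'op \<psi> (butlast X)))"
    unfolding E by (rule joinSup_butlast_right[symmetric]) (use lenX in simp)
  finally have "butlast X = joinSup \<psi> (butlast l) (Eop \<psi> g (S'op \<psi> (butlast X)))" .
  from Suc.hyps(1)[OF _ butlast_in_lists[OF Suc.prems(1)] butlast_in_lists[OF Suc.prems(2)] this]
  have IH: "butlast X = Cop \<psi> g (butlast l)"
    using Suc.hyps(2) by simp
  from Suc.hyps(2) have "l \<noteq> []" by auto
  have "Cop \<psi> g l = joinSup \<psi> l (butlast ?E)"
    unfolding Cop_not_Nil[OF \<open>l \<noteq> []\<close>] IH[symmetric] E by (rule refl)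
  also have "\<dots> = joinSup \<psi> l ?E"
    by (rule joinSup_butlast_right) (simp add: lenX)
  finally show ?case by (rule trans[OF Suc.prems(3) sym])
qed

lemma Pact_hist1:
  assumes typed: "wd_typed \<psi>" and g: "hist1_family \<psi> g"
  shows "hist1 (cbox \<psi>) (Pact \<psi> g)"
  unfolding hist1_def
proof (intro ballI conjI impI)
  fix l assume l: "l \<in> lists (in_tups (cbox \<psi>))"
  let ?C = "Cop \<psi> g l" and ?E = "Eop \<psi> g (S'op \<psi> (Cop \<psi> g l))"
  have L: "S'op \<psi> ?C \<in> lists (inDem_tups \<psi>)" by (intro S'op_in_lists Cop_in_lists typed g l)
  have E: "?E \<in> lists (inSup_tups \<psi>)" by (rule Eop_in_lists[OF typed g L])
  show "Pact \<psi> g l \<in> lists (out_tups (cbox \<psi>))"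
    unfolding Pact_def in_lists_iff_nth
  proof (intro allI impI)
    fix t assume "t < length (S''op \<psi> ?E)"
    then have t: "t < length ?E" by simp
    with E have "?E ! t \<in> inSup_tups \<psi>" by (simp add: in_lists_iff_nth)
    from tupD[OF this wd_typedD(3)[OF typed]] wd_typedD(4)[OF typed] t
    show "S''op \<psi> ?E ! t \<in> out_tups (cbox \<psi>)" by (auto simp: tup_iff)
  qed
  show "length (Pact \<psi> g l) = length l + 1" by simp
  assume "l \<noteq> []"
  then have ne: "S'op \<psi> ?C \<noteq> []" by (metis length_0_conv length_Cop length_S'op)
  show "butlast (Pact \<psi> g l) = Pact \<psi> g (butlast l)"
    unfolding Pact_def Cop_butlast[OF typed g l] S'op_butlast S''op_butlast Eop_butlast[OF g L ne]
    by (rule refl)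
qed

section \<open>The identity law\<close>

lemma wd_id_simps[simp]:
  "idx (wd_id Z i0) = {i0}" "dbox (wd_id Z i0) = (\<lambda>_. Z)" "cbox (wd_id Z i0) = Z"
  "del (wd_id Z i0) = {}"
  "sup (wd_id Z i0) (DOutZ w) = SOutY i0 w" "sup (wd_id Z i0) (DInY i w) = SInZ w"
  by (simp_all add: wd_id_def)

lemma wd_typed_wd_id: "wd_typed (wd_id Z i0)"
  unfolding wd_typed_def inDem_def by auto

lemma Pact_wd_id:
  fixes Z :: "('w, 'v) box" and i0 :: 'i and f :: "('w, 'v) propag"
  assumes f: "hist1 Z f" and l: "l \<in> lists (in_tups Z)"
  shows "Pact (wd_id Z i0 :: ('w, 'i, 'd, 'v) wd) (\<lambda>_. f) l = f l"
proof -
  let ?\<psi> = "wd_id Z i0 :: ('w, 'i, 'd, 'v) wd"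
  let ?C = "Cop ?\<psi> (\<lambda>_. f) l"
  have g: "hist1_family ?\<psi> (\<lambda>_. f)" using f by (simp add: hist1_family_def)
  from l have "l \<in> lists (in_tups (cbox ?\<psi>))" by simp
  note feedback = Cop_fixpoint[OF wd_typed_wd_id g this]
  \<comment> \<open>the feedback equation of the identity wires the outer input straight to the inner one\<close>
  have inner_input: "map (unzipY ?\<psi> i0) (S'op ?\<psi> ?C) = l"
  proof (rule nth_equalityI)
    fix t assume "t < length (map (unzipY ?\<psi> i0) (S'op ?\<psi> ?C))"
    then have t: "t < length l" by simp
    have "(?C ! t) (SInZ w) = (if w \<in> inp Z then (l ! t) w else undefined)" for w
      using arg_cong[OF feedback, of "\<lambda>X. (X ! t) (SInZ w)"] t by simp
    moreover have "l ! t \<in> in_tups Z" using l t by (simp add: in_lists_iff_nth)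
    ultimately show "map (unzipY ?\<psi> i0) (S'op ?\<psi> ?C) ! t = l ! t"
      using t tup_undefined[of "l ! t"] by (auto simp: unzipY_def)
  qed simp
  show ?thesis
  proof (rule nth_equalityI)
    show "length (Pact ?\<psi> (\<lambda>_. f) l) = length (f l)" using hist1D(2)[OF f l] by simp
  next
    fix t assume "t < length (Pact ?\<psi> (\<lambda>_. f) l)"
    then have t: "t \<le> length l" by simp
    with hist1D(1,2)[OF f l] have "f l ! t \<in> out_tups Z" by (simp add: in_lists_iff_nth)
    with t tup_undefined[of "f l ! t"] show "Pact ?\<psi> (\<lambda>_. f) l ! t = f l ! t"
      unfolding Pact_def by (auto simp: inner_input less_Suc_eq_le)
  qed
qed

section \<open>The composite wiring diagram is well typed\<close>

lemma wd_comp_simps[simp]: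
  "idx (wd_comp \<psi> \<phi>) = Sigma (idx \<psi>) (\<lambda>i. idx (\<phi> i))"
  "dbox (wd_comp \<psi> \<phi>) (i, k) = dbox (\<phi> i) k"
  "cbox (wd_comp \<psi> \<phi>) = cbox \<psi>"
  "del (wd_comp \<psi> \<phi>) = Sigma (idx \<psi>) (\<lambda>i. del (\<phi> i)) <+> del \<psi>"
  "dvs (wd_comp \<psi> \<phi>) (Inl (i, e)) = dvs (\<phi> i) e"
  "dvs (wd_comp \<psi> \<phi>) (Inr d) = dvs \<psi> d"
  "sup (wd_comp \<psi> \<phi>) = comp_sup \<psi> \<phi>"
  by (simp_all add: wd_comp_def)

lemma in_Plus_simps[simp]: "Inl a \<in> A <+> B \<longleftrightarrow> a \<in> A" "Inr b \<in> A <+> B \<longleftrightarrow> b \<in> B"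
  by auto

lemma dport_comp_cases[case_names DOutZ DInY DDel_phi DDel_psi]:
  fixes p :: "('w, 'i \<times> 'k, ('i \<times> 'e) + 'd) dport"
  obtains w where "p = DOutZ w" | i k w where "p = DInY (i, k) w"
    | i e where "p = DDel (Inl (i, e))" | d where "p = DDel (Inr d)"
  by (metis dport.exhaust old.prod.exhaust sum.exhaust)

lemma sport_comp_cases[case_names SInZ SOutY SDel_phi SDel_psi]:
  fixes p :: "('w, 'i \<times> 'k, ('i \<times> 'e) + 'd) sport"
  obtains w where "p = SInZ w" | i k w where "p = SOutY (i, k) w"
    | i e where "p = SDel (Inl (i, e))" | d where "p = SDel (Inr d)"
  by (metis sport.exhaust old.prod.exhaust sum.exhaust)

lemma wd_comp_port_simps[simp]:
  "SOutY (i, k) w \<in> inSup (wd_comp \<psi> \<phi>) \<longleftrightarrow>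
     i \<in> idx \<psi> \<and> k \<in> idx (\<phi> i) \<and> w \<in> outp (dbox (\<phi> i) k)"
  "SOutY (i, k) w \<in> supset (wd_comp \<psi> \<phi>) \<longleftrightarrow>
     i \<in> idx \<psi> \<and> k \<in> idx (\<phi> i) \<and> w \<in> outp (dbox (\<phi> i) k)"
  "DInY (i, k) w \<in> inDem (wd_comp \<psi> \<phi>) \<longleftrightarrow>
     i \<in> idx \<psi> \<and> k \<in> idx (\<phi> i) \<and> w \<in> inp (dbox (\<phi> i) k)"
  by (simp_all del: wd_comp_simps add: wd_comp_def)

locale typed_composition =
  fixes \<psi> :: "('w, 'i, 'd, 'v) wd" and \<phi> :: "'i \<Rightarrow> ('w, 'k, 'e, 'v) wd"
  assumes typed_psi: "wd_typed \<psi>"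
    and typed_phi: "\<And>i. i \<in> idx \<psi> \<Longrightarrow> wd_typed (\<phi> i)"
    and cbox_phi: "\<And>i. i \<in> idx \<psi> \<Longrightarrow> cbox (\<phi> i) = dbox \<psi> i"
begin

lemma liftX_typed:
  assumes "i \<in> idx \<psi>" and "q \<in> inSup (\<phi> i)"
  shows "(liftX i q :: ('w, 'i \<times> 'k, ('i \<times> 'e) + 'd) sport) \<in> inSup (wd_comp \<psi> \<phi>)"
    and "vsetS (wd_comp \<psi> \<phi>) (liftX i q) = vsetS (\<phi> i) q"
  using assms by (cases q; simp)+

lemma comp_f_typed:
  assumes r: "r \<in> supset \<psi>"
  shows "comp_f \<psi> \<phi> r \<in> supset (wd_comp \<psi> \<phi>)
     \<and> vsetS (wd_comp \<psi> \<phi>) (comp_f \<psi> \<phi> r) = vsetS \<psi> r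
     \<and> (r \<in> inSup \<psi> \<longrightarrow> comp_f \<psi> \<phi> r \<in> inSup (wd_comp \<psi> \<phi>))"
proof (cases r)
  case (SOutY i w)
  with r cbox_phi have i: "i \<in> idx \<psi>" and w: "w \<in> outp (cbox (\<phi> i))" by auto
  note q = wd_typedD(3,4)[OF typed_phi[OF i] w]
  with liftX_typed[OF i q(1)] SOutY cbox_phi[OF i] inSup_subset_supset show ?thesis by auto
qed (use r in simp_all)

lemma comp_h_typed:
  assumes i: "i \<in> idx \<psi>" and q: "q \<in> supset (\<phi> i)"
  shows "comp_h \<psi> \<phi> i q \<in> supset (wd_comp \<psi> \<phi>)
     \<and> vsetS (wd_comp \<psi> \<phi>) (comp_h \<psi> \<phi> i q) = vsetS (\<phi> i) q"
proof (cases q)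
  case (SInZ w)
  with q cbox_phi[OF i] have "DInY i w \<in> inDem \<psi>" using i by simp
  note r = wd_typedD(1,2)[OF typed_psi this]
  with comp_f_typed[OF r(1)] SInZ cbox_phi[OF i] show ?thesis by simp
qed (use q i in simp_all)

lemma wd_typed_wd_comp: "wd_typed (wd_comp \<psi> \<phi>)"
proof -
  have "sup (wd_comp \<psi> \<phi>) p \<in> supset (wd_comp \<psi> \<phi>) \<and>
        vsetS (wd_comp \<psi> \<phi>) (sup (wd_comp \<psi> \<phi>) p) = vsetD (wd_comp \<psi> \<phi>) p"
    if p: "p \<in> inDem (wd_comp \<psi> \<phi>)" for p
  proof (cases p rule: dport_comp_cases)
    case (DInY i k w)
    with p have i: "i \<in> idx \<psi>" and "DInY k w \<in> inDem (\<phi> i)" by auto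
    from wd_typedD(1,2)[OF typed_phi[OF i] this(2)] comp_h_typed[OF i] DInY show ?thesis
      by auto
  next
    case (DDel_phi i e)
    with p have i: "i \<in> idx \<psi>" and "DDel e \<in> inDem (\<phi> i)" by auto
    from wd_typedD(1,2)[OF typed_phi[OF i] this(2)] comp_h_typed[OF i] DDel_phi show ?thesis
      by auto
  next
    case (DDel_psi d)
    with p have "DDel d \<in> inDem \<psi>" by auto
    from wd_typedD(1,2)[OF typed_psi this] comp_f_typed DDel_psi show ?thesis by auto
  qed (use p in simp)
  moreover have "pointed (dvs (wd_comp \<psi> \<phi>) x)" if "x \<in> del (wd_comp \<psi> \<phi>)" for x
    using that wd_typedD(5)[OF typed_psi] wd_typedD(5)[OF typed_phi] by auto
  moreover have "sup (wd_comp \<psi> \<phi>) (DOutZ w) \<in> inSup (wd_comp \<psi> \<phi>) \<and>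
        vsetS (wd_comp \<psi> \<phi>) (sup (wd_comp \<psi> \<phi>) (DOutZ w)) = vout (cbox (wd_comp \<psi> \<phi>)) w"
    if "w \<in> outp (cbox (wd_comp \<psi> \<phi>))" for w
  proof -
    from that have w: "w \<in> outp (cbox \<psi>)" by simp
    note r = wd_typedD(3,4)[OF typed_psi w]
    with comp_f_typed[OF subsetD[OF inSup_subset_supset r(1)]] show ?thesis by simp
  qed
  ultimately show ?thesis unfolding wd_typed_def by blast
qed

end
section \<open>The trace of the composite\<close>

definition join_traces :: "('w, 'i, 'd, 'v) wd \<Rightarrow> ('i \<Rightarrow> (('w, 'k, 'e) sport \<Rightarrow> 'v) list)
    \<Rightarrow> (('w, 'i, 'd) sport \<Rightarrow> 'v) list \<Rightarrow> (('w, 'i \<times> 'k, ('i \<times> 'e) + 'd) sport \<Rightarrow> 'v) list"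
  where
  "join_traces \<psi> Cs C = map (\<lambda>t. \<lambda>p. case p of
       SInZ w \<Rightarrow> (C ! t) (SInZ w)
     | SOutY (i, k) w \<Rightarrow> (if i \<in> idx \<psi> then (Cs i ! t) (SOutY k w) else undefined)
     | SDel (Inl (i, e)) \<Rightarrow> (if i \<in> idx \<psi> then (Cs i ! t) (SDel e) else undefined)
     | SDel (Inr d) \<Rightarrow> (C ! t) (SDel d)) [0..<length C]"

lemma length_join_traces[simp]: "length (join_traces \<psi> Cs C) = length C"
  by (simp add: join_traces_def)

lemma join_traces_nth[simp]:
  assumes "t < length C"
  shows "(join_traces \<psi> Cs C ! t) (SInZ w) = (C ! t) (SInZ w)"
    and "(join_traces \<psi> Cs C ! t) (SOutY (i, k) w) =
           (if i \<in> idx \<psi> then (Cs i ! t) (SOutY k w) else undefined)"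
    and "(join_traces \<psi> Cs C ! t) (SDel (Inl (i, e))) =
           (if i \<in> idx \<psi> then (Cs i ! t) (SDel e) else undefined)"
    and "(join_traces \<psi> Cs C ! t) (SDel (Inr d)) = (C ! t) (SDel d)"
  using assms by (simp_all add: join_traces_def)

locale composite_trace = typed_composition \<psi> \<phi>
  for \<psi> :: "('w, 'i, 'd, 'v) wd" and \<phi> :: "'i \<Rightarrow> ('w, 'k, 'e, 'v) wd" +
  fixes f :: "'i \<times> 'k \<Rightarrow> ('w, 'v) propag" and l :: "('w \<Rightarrow> 'v) list"
  assumes f: "\<And>i k. i \<in> idx \<psi> \<Longrightarrow> k \<in> idx (\<phi> i) \<Longrightarrow> hist1 (dbox (\<phi> i) k) (f (i, k))"
    and l: "l \<in> lists (in_tups (cbox \<psi>))"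
begin

abbreviation "\<omega> \<equiv> wd_comp \<psi> \<phi>"
abbreviation "Pphi \<equiv> \<lambda>i. Pact (\<phi> i) (\<lambda>k. f (i, k))"
abbreviation "Cpsi \<equiv> Cop \<psi> Pphi l"
abbreviation "Epsi \<equiv> Eop \<psi> Pphi (S'op \<psi> Cpsi)"
abbreviation "inner_in i \<equiv> map (unzipY \<psi> i) (S'op \<psi> Cpsi)"
abbreviation "Cphi i \<equiv> Cop (\<phi> i) (\<lambda>k. f (i, k)) (inner_in i)"
abbreviation "Ephi i \<equiv> Eop (\<phi> i) (\<lambda>k. f (i, k)) (S'op (\<phi> i) (Cphi i))"
abbreviation "J \<equiv> join_traces \<psi> Cphi Cpsi"
abbreviation "Eomega \<equiv> Eop \<omega> f (S'op \<omega> J)"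

lemma hist1_family_phi: "i \<in> idx \<psi> \<Longrightarrow> hist1_family (\<phi> i) (\<lambda>k. f (i, k))"
  using f by (simp add: hist1_family_def)

lemma hist1_family_psi: "hist1_family \<psi> Pphi"
  unfolding hist1_family_def
  using Pact_hist1[OF typed_phi hist1_family_phi] cbox_phi by fastforce

lemma hist1_family_omega: "hist1_family \<omega> f"
  using f by (auto simp: hist1_family_def)

lemma Cpsi_in_lists: "Cpsi \<in> lists (sup_tups \<psi>)"
  by (rule Cop_in_lists[OF typed_psi hist1_family_psi l])

lemma inner_in_in_lists: "i \<in> idx \<psi> \<Longrightarrow> inner_in i \<in> lists (in_tups (cbox (\<phi> i)))"
  using map_unzipY_in_lists[OF S'op_in_lists[OF typed_psi Cpsi_in_lists]] cbox_phi by simp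

lemma Cphi_in_lists: "i \<in> idx \<psi> \<Longrightarrow> Cphi i \<in> lists (sup_tups (\<phi> i))"
  by (rule Cop_in_lists[OF typed_phi hist1_family_phi inner_in_in_lists])

lemma Cpsi_nth:
  assumes t: "t < length l"
  shows "(Cpsi ! t) (SInZ w) = (if w \<in> inp (cbox \<psi>) then (l ! t) w else undefined)"
    and "(Cpsi ! t) (SOutY i w) = (Epsi ! t) (SOutY i w)"
    and "(Cpsi ! t) (SDel d) = (Epsi ! t) (SDel d)"
  using arg_cong[OF Cop_fixpoint[OF typed_psi hist1_family_psi l], of "\<lambda>X. (X ! t) (SInZ w)"]
    arg_cong[OF Cop_fixpoint[OF typed_psi hist1_family_psi l], of "\<lambda>X. (X ! t) (SOutY i w)"]
    arg_cong[OF Cop_fixpoint[OF typed_psi hist1_family_psi l], of "\<lambda>X. (X ! t) (SDel d)"] t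
  by simp_all

lemma Cphi_nth:
  assumes i: "i \<in> idx \<psi>" and t: "t < length l"
  shows "(Cphi i ! t) (SInZ w) = (if w \<in> inp (cbox (\<phi> i)) then (inner_in i ! t) w else undefined)"
    and "(Cphi i ! t) (SOutY k w) = (Ephi i ! t) (SOutY k w)"
    and "(Cphi i ! t) (SDel e) = (Ephi i ! t) (SDel e)"
  using arg_cong[OF Cop_fixpoint[OF typed_phi[OF i] hist1_family_phi[OF i] inner_in_in_lists[OF i]],
      of "\<lambda>X. (X ! t) (SInZ w)"]
    arg_cong[OF Cop_fixpoint[OF typed_phi[OF i] hist1_family_phi[OF i] inner_in_in_lists[OF i]],
      of "\<lambda>X. (X ! t) (SOutY k w)"]
    arg_cong[OF Cop_fixpoint[OF typed_phi[OF i] hist1_family_phi[OF i] inner_in_in_lists[OF i]],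
      of "\<lambda>X. (X ! t) (SDel e)"] t
  by simp_all

lemma Epsi_nth_SOutY:
  assumes i: "i \<in> idx \<psi>" and w: "w \<in> outp (dbox \<psi> i)" and t: "t \<le> length l"
  shows "(Epsi ! t) (SOutY i w) = (Ephi i ! t) (sup (\<phi> i) (DOutZ w))"
  using i w t cbox_phi[OF i] by (simp add: Pact_def less_Suc_eq_le)

lemma J_comp_f:
  assumes t: "t < length l" and r: "r \<in> supset \<psi>"
  shows "(J ! t) (comp_f \<psi> \<phi> r) = (Cpsi ! t) r"
proof (cases r)
  case (SOutY i w)
  with r have i: "i \<in> idx \<psi>" and w: "w \<in> outp (dbox \<psi> i)" by auto
  have q: "sup (\<phi> i) (DOutZ w) \<in> inSup (\<phi> i)"
    using wd_typedD(3)[OF typed_phi[OF i]] w cbox_phi[OF i] by simp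
  have "(J ! t) (comp_f \<psi> \<phi> r) = (Ephi i ! t) (sup (\<phi> i) (DOutZ w))"
    using q SOutY t i Cphi_nth[OF i t] by (cases "sup (\<phi> i) (DOutZ w)") auto
  also have "\<dots> = (Cpsi ! t) r"
    using Epsi_nth_SOutY[OF i w] t Cpsi_nth[OF t] SOutY by simp
  finally show ?thesis .
qed (use t in simp_all)

lemma J_comp_h:
  assumes t: "t < length l" and i: "i \<in> idx \<psi>" and q: "q \<in> supset (\<phi> i)"
  shows "(J ! t) (comp_h \<psi> \<phi> i q) = (Cphi i ! t) q"
proof (cases q)
  case (SInZ w)
  with q cbox_phi[OF i] have w: "w \<in> inp (dbox \<psi> i)" by simp
  with i have "DInY i w \<in> inDem \<psi>" by simp
  from J_comp_f[OF t wd_typedD(1)[OF typed_psi this]] SInZ Cphi_nth[OF i t] t i w cbox_phi[OF i]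
  show ?thesis by (simp add: unzipY_def)
qed (use t i in simp_all)

lemma inner_in_omega:
  assumes i: "i \<in> idx \<psi>" and k: "k \<in> idx (\<phi> i)"
  shows "map (unzipY \<omega> (i, k)) (S'op \<omega> J) = map (unzipY (\<phi> i) k) (S'op (\<phi> i) (Cphi i))"
proof (rule nth_equalityI)
  fix t assume "t < length (map (unzipY \<omega> (i, k)) (S'op \<omega> J))"
  then have t: "t < length l" by simp
  have "unzipY \<omega> (i, k) (S'op \<omega> J ! t) w = unzipY (\<phi> i) k (S'op (\<phi> i) (Cphi i) ! t) w" for w
  proof (cases "w \<in> inp (dbox (\<phi> i) k)")
    case True
    with k have "DInY k w \<in> inDem (\<phi> i)" by simp
    from J_comp_h[OF t i wd_typedD(1)[OF typed_phi[OF i] this]] True i k t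
    show ?thesis by (simp add: unzipY_def)
  qed (use t in \<open>simp add: unzipY_def\<close>)
  with t show "map (unzipY \<omega> (i, k)) (S'op \<omega> J) ! t = map (unzipY (\<phi> i) k) (S'op (\<phi> i) (Cphi i)) ! t"
    by auto
qed simp

lemma Eomega_nth_phi:
  assumes t: "t \<le> length l" and i: "i \<in> idx \<psi>"
  shows "(Eomega ! t) (SOutY (i, k) w) = (Ephi i ! t) (SOutY k w)"
    and "(Eomega ! t) (SDel (Inl (i, e))) = (Ephi i ! t) (SDel e)"
proof -
  show "(Eomega ! t) (SOutY (i, k) w) = (Ephi i ! t) (SOutY k w)"
    using inner_in_omega[OF i] t i by (cases "k \<in> idx (\<phi> i)") simp_all
  show "(Eomega ! t) (SDel (Inl (i, e))) = (Ephi i ! t) (SDel e)"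
  proof (cases "e \<in> del (\<phi> i) \<and> t \<noteq> 0")
    case True
    with t have t1: "t - 1 < length l" by auto
    from True have "DDel e \<in> inDem (\<phi> i)" by simp
    from J_comp_h[OF t1 i wd_typedD(1)[OF typed_phi[OF i] this]] True t i t1 show ?thesis by simp
  qed (use t i in auto)
qed

lemma Eomega_nth_psi:
  assumes t: "t \<le> length l"
  shows "(Eomega ! t) (SDel (Inr d)) = (Epsi ! t) (SDel d)"
    and "i \<in> idx \<psi> \<Longrightarrow> w \<in> outp (dbox \<psi> i) \<Longrightarrow>
      (Eomega ! t) (comp_f \<psi> \<phi> (SOutY i w)) = (Epsi ! t) (SOutY i w)"
proof -
  show "(Eomega ! t) (SDel (Inr d)) = (Epsi ! t) (SDel d)"
  proof (cases "d \<in> del \<psi> \<and> t \<noteq> 0")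
    case True
    with t have t1: "t - 1 < length l" by auto
    from True have "DDel d \<in> inDem \<psi>" by simp
    from J_comp_f[OF t1 wd_typedD(1)[OF typed_psi this]] True t t1 show ?thesis by simp
  qed (use t in auto)
  assume i: "i \<in> idx \<psi>" and w: "w \<in> outp (dbox \<psi> i)"
  have q: "sup (\<phi> i) (DOutZ w) \<in> inSup (\<phi> i)"
    using wd_typedD(3)[OF typed_phi[OF i]] w cbox_phi[OF i] by simp
  have "(Eomega ! t) (comp_f \<psi> \<phi> (SOutY i w)) = (Ephi i ! t) (sup (\<phi> i) (DOutZ w))"
    using q Eomega_nth_phi[OF t i] by (cases "sup (\<phi> i) (DOutZ w)") auto
  also have "\<dots> = (Epsi ! t) (SOutY i w)" using Epsi_nth_SOutY[OF i w t] by simp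
  finally show "(Eomega ! t) (comp_f \<psi> \<phi> (SOutY i w)) = (Epsi ! t) (SOutY i w)" .
qed

lemma J_feedback: "J = joinSup \<omega> l Eomega"
proof (rule nth_equalityI)
  fix t assume "t < length J"
  then have t: "t < length l" by simp
  then have t': "t \<le> length l" by simp
  have "(J ! t) p = (joinSup \<omega> l Eomega ! t) p" for p
  proof (cases p rule: sport_comp_cases)
    case (SInZ w)
    with t Cpsi_nth[OF t] show ?thesis by simp
  next
    case (SOutY i k w)
    with t t' Eomega_nth_phi[OF t'] Cphi_nth[OF _ t] show ?thesis by (cases "i \<in> idx \<psi>") simp_all
  next
    case (SDel_phi i e)
    with t t' Eomega_nth_phi[OF t'] Cphi_nth[OF _ t] show ?thesis by (cases "i \<in> idx \<psi>") simp_all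
  next
    case (SDel_psi d)
    with t Eomega_nth_psi[OF t'] Cpsi_nth[OF t] show ?thesis by simp
  qed
  then show "J ! t = joinSup \<omega> l Eomega ! t" by blast
qed simp

lemma J_in_lists: "J \<in> lists (sup_tups \<omega>)"
  unfolding in_lists_iff_nth
proof (intro allI impI)
  fix t assume "t < length J"
  then have t: "t < length l" by simp
  have C: "Cpsi ! t \<in> sup_tups \<psi>" using Cpsi_in_lists t by (simp add: in_lists_iff_nth)
  have Cs: "i \<in> idx \<psi> \<Longrightarrow> Cphi i ! t \<in> sup_tups (\<phi> i)" for i
    using Cphi_in_lists t by (simp add: in_lists_iff_nth)
  show "J ! t \<in> sup_tups \<omega>"
    unfolding tup_iff
  proof (intro conjI ballI allI impI)
    fix p assume p: "p \<in> supset \<omega>"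
    show "(J ! t) p \<in> fst (vsetS \<omega> p)"
    proof (cases p rule: sport_comp_cases)
      case (SInZ w) with p t tupD[OF C, of "SInZ w"] show ?thesis by simp
    next
      case (SOutY i k w) with p t tupD[OF Cs, of i "SOutY k w"] show ?thesis by auto
    next
      case (SDel_phi i e) with p t tupD[OF Cs, of i "SDel e"] show ?thesis by auto
    next
      case (SDel_psi d) with p t tupD[OF C, of "SDel d"] show ?thesis by auto
    qed
  next
    fix p assume p: "p \<notin> supset \<omega>"
    show "(J ! t) p = undefined"
    proof (cases p rule: sport_comp_cases)
      case (SInZ w) with p t tup_undefined[OF C, of "SInZ w"] show ?thesis by simp
    next
      case (SOutY i k w) with p t tup_undefined[OF Cs, of i "SOutY k w"] show ?thesis by auto
    next
      case (SDel_phi i e) with p t tup_undefined[OF Cs, of i "SDel e"] show ?thesis by auto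
    next
      case (SDel_psi d) with p t tup_undefined[OF C, of "SDel d"] show ?thesis by auto
    qed
  qed
qed

lemma Cop_wd_comp: "Cop \<omega> f l = J"
  using Cop_unique_fixpoint[OF wd_typed_wd_comp
      hist1_family_omega _ J_in_lists J_feedback] l
  by simp

lemma Pact_wd_comp: "Pact \<omega> f l = Pact \<psi> Pphi l"
proof (rule nth_equalityI)
  fix t assume "t < length (Pact \<omega> f l)"
  then have t: "t \<le> length l" by simp
  have "(Pact \<omega> f l ! t) w = (Pact \<psi> Pphi l ! t) w" for w
  proof (cases "w \<in> outp (cbox \<psi>)")
    case True
    note r = wd_typedD(3)[OF typed_psi True]
    have "(Eomega ! t) (comp_f \<psi> \<phi> (sup \<psi> (DOutZ w))) = (Epsi ! t) (sup \<psi> (DOutZ w))"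
      using r Eomega_nth_psi[OF t] by (cases "sup \<psi> (DOutZ w)") simp_all
    with True t show ?thesis unfolding Pact_def Cop_wd_comp by (simp add: less_Suc_eq_le)
  qed (use t in \<open>simp add: Pact_def less_Suc_eq_le\<close>)
  then show "Pact \<omega> f l ! t = Pact \<psi> Pphi l ! t" by blast
qed simp

end

theorem theorem3p14:
  shows "(\<forall>(Z :: ('w, 'v) box) (i0 :: 'i) (f :: ('w, 'v) propag).
            box_wf Z \<and> hist1 Z f \<longrightarrow>
            (\<forall>l \<in> lists (tup (inp Z) (vin Z)).
               Pact (wd_id Z i0 :: ('w, 'i, 'd, 'v) wd) (\<lambda>_. f) l = f l))
       \<and> (\<forall>(\<psi> :: ('w, 'i, 'd, 'v) wd) (\<phi> :: 'i \<Rightarrow> ('w, 'k, 'e, 'v) wd)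
            (f :: 'i \<times> 'k \<Rightarrow> ('w, 'v) propag).
            wd_wf \<psi>
            \<and> (\<forall>i \<in> idx \<psi>. wd_wf (\<phi> i) \<and> cbox (\<phi> i) = dbox \<psi> i)
            \<and> (\<forall>i \<in> idx \<psi>. \<forall>k \<in> idx (\<phi> i). hist1 (dbox (\<phi> i) k) (f (i, k)))
            \<longrightarrow>
            (\<forall>l \<in> lists (tup (inp (cbox \<psi>)) (vin (cbox \<psi>))).
               Pact (wd_comp \<psi> \<phi>) f l = Pact \<psi> (\<lambda>i. Pact (\<phi> i) (\<lambda>k. f (i, k))) l))"
proof (intro conjI allI impI ballI)
  fix Z :: "('w, 'v) box" and i0 :: 'i and f :: "('w, 'v) propag" and l
  assume "box_wf Z \<and> hist1 Z f" and "l \<in> lists (tup (inp Z) (vin Z))"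
  then show "Pact (wd_id Z i0 :: ('w, 'i, 'd, 'v) wd) (\<lambda>_. f) l = f l"
    by (simp add: Pact_wd_id)
next
  fix \<psi> :: "('w, 'i, 'd, 'v) wd" and \<phi> :: "'i \<Rightarrow> ('w, 'k, 'e, 'v) wd"
    and f :: "'i \<times> 'k \<Rightarrow> ('w, 'v) propag" and l
  assume "wd_wf \<psi>
            \<and> (\<forall>i \<in> idx \<psi>. wd_wf (\<phi> i) \<and> cbox (\<phi> i) = dbox \<psi> i)
            \<and> (\<forall>i \<in> idx \<psi>. \<forall>k \<in> idx (\<phi> i). hist1 (dbox (\<phi> i) k) (f (i, k)))"
    and "l \<in> lists (tup (inp (cbox \<psi>)) (vin (cbox \<psi>)))"
  then show "Pact (wd_comp \<psi> \<phi>) f l = Pact \<psi> (\<lambda>i. Pact (\<phi> i) (\<lambda>k. f (i, k))) l"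
    by (intro composite_trace.Pact_wd_comp)
      (simp_all add: composite_trace_def composite_trace_axioms_def typed_composition_def
        wd_wf_imp_wd_typed)
qed

end
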